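(* Let $(X_{s,t})$ be the INMA$(q_1,q_2)$ random field defined in the context with Poisson innovations $\varepsilon_{s,t}\sim\mathrm{Poi}(\mu_\varepsilon)$, $\mu_\varepsilon>0$, and let $\mu_X=\mu_\varepsilon\beta_\bullet$. Let $0\le k\le q_1$, $0\le l\le q_2$. Then: (i) the autocorrelation $\rho(k,l):=\operatorname{Corr}(X_{s,t},X_{s+k,t+l})$ equals $$\rho(k,l)=\frac{1}{\beta_\bullet}\sum_{i=k}^{q_1}\sum_{j=l}^{q_2}p_{(i,j),(i-k,j-l)};$$ (ii) for all $u_1,u_2\in[-1,1]$, $$\mathbb{E}\big(u_1^{X_{s,t}}u_2^{X_{s-k,t-l}}\big)=\exp\big(\mu_X(u_1+u_2-2)\big)\exp\big(\mu_X\,\rho(k,l)\,(u_1-1)(u_2-1)\big),$$ i.e. $(X_{s,t},X_{s-k,t-l})$ has a bivariate Poisson distribution: it has the law of $(A+C,B+C)$ with $A,B,C$ independent, $A,B\sim\mathrm{Poi}(\mu_X(1-\rho(k,l)))$ and $C\sim\mathrm{Poi}(\mu_X\rho(k,l))$.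
   Context: INMA$(q_1,q_2)$ random field: Fix $q_1,q_2\in\mathbb{N}_0$ with $q_1+q_2\ge 1$ and parameters $\beta_{ij}\in[0,1]$ for $0\le i\le q_1$, $0\le j\le q_2$, not all zero; put $\beta_\bullet=\sum_{i=0}^{q_1}\sum_{j=0}^{q_2}\beta_{ij}$. Let $(\varepsilon_{s,t})_{s,t\in\mathbb{Z}}$ be i.i.d. random variables with values in $\mathbb{N}_0$. Let $\mathbf{Z}_{s,t;r}=(Z^{(i,j)}_{s,t;r})_{0\le i\le q_1,0\le j\le q_2}$, $s,t\in\mathbb{Z}$, $r\in\mathbb{N}$, be i.i.d. random vectors (distributed as a generic vector $\mathbf{Z}=(Z^{(i,j)})$), independent of $(\varepsilon_{s,t})$, whose components are Bernoulli with $\mathbb{P}(Z^{(i,j)}=1)=\beta_{ij}$; the components within one vector may be arbitrarily dependent. Write $p_{(i,j),(i',j')}:=\mathbb{P}(Z^{(i,j)}=1,\,Z^{(i',j')}=1)$. The field is $X_{s,t}=\sum_{i=0}^{q_1}\sum_{j=0}^{q_2}\sum_{r=1}^{\varepsilon_{s-i,t-j}}Z^{(i,j)}_{s-i,t-j;r}$. *)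

theory Defs
  imports "HOL-Probability.Probability"
begin

(* Poisson law with rate r >= 0; rate 0 is the point mass at 0
   (HOL's poisson_pmf is only specified for positive rates). *)
definition poi :: "real \<Rightarrow> nat pmf" where
  "poi r = (if r = 0 then return_pmf 0 else poisson_pmf r)"

definition corr :: "'a measure \<Rightarrow> ('a \<Rightarrow> real) \<Rightarrow> ('a \<Rightarrow> real) \<Rightarrow> real" where
  "corr M U V =
     (\<integral>\<omega>. (U \<omega> - (\<integral>x. U x \<partial>M)) * (V \<omega> - (\<integral>x. V x \<partial>M)) \<partial>M)
     / sqrt ((\<integral>\<omega>. (U \<omega> - (\<integral>x. U x \<partial>M))\<^sup>2 \<partial>M) * (\<integral>\<omega>. (V \<omega> - (\<integral>x. V x \<partial>M))\<^sup>2 \<partial>M))"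

(* The random vector Z_{s,t;r} is encoded by the set of indices (i,j) with Z^{(i,j)}_{s,t;r} = 1 *)
definition Zcomp :: "(int \<times> int \<times> nat \<Rightarrow> 'a \<Rightarrow> (nat \<times> nat) set) \<Rightarrow> int \<Rightarrow> int \<Rightarrow> nat \<Rightarrow> nat \<Rightarrow> nat \<Rightarrow> 'a \<Rightarrow> nat" where
  "Zcomp Z s t r i j \<omega> = (if (i, j) \<in> Z (s, t, r) \<omega> then 1 else 0)"

definition inma_field :: "nat \<Rightarrow> nat \<Rightarrow> (int \<times> int \<Rightarrow> 'a \<Rightarrow> nat)
    \<Rightarrow> (int \<times> int \<times> nat \<Rightarrow> 'a \<Rightarrow> (nat \<times> nat) set) \<Rightarrow> int \<Rightarrow> int \<Rightarrow> 'a \<Rightarrow> nat" where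
  "inma_field q1 q2 eps Z s t \<omega> =
     (\<Sum>i\<in>{0..q1}. \<Sum>j\<in>{0..q2}. \<Sum>r\<in>{1..eps (s - int i, t - int j) \<omega>}.
        Zcomp Z (s - int i) (t - int j) r i j \<omega>)"

(* joint family of all innovations and all thinning vectors, used to express
   mutual independence of (eps_{s,t}) and (Z_{s,t;r}) *)
definition inma_family :: "(int \<times> int \<Rightarrow> 'a \<Rightarrow> nat)
    \<Rightarrow> (int \<times> int \<times> nat \<Rightarrow> 'a \<Rightarrow> (nat \<times> nat) set)
    \<Rightarrow> (int \<times> int) + (int \<times> int \<times> nat) \<Rightarrow> 'a \<Rightarrow> nat + (nat \<times> nat) set" where
  "inma_family eps Z x \<omega> = (case x of Inl st \<Rightarrow> Inl (eps st \<omega>) | Inr str \<Rightarrow> Inr (Z str \<omega>))"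

definition pZ :: "(nat \<times> nat) set pmf \<Rightarrow> nat \<times> nat \<Rightarrow> nat \<times> nat \<Rightarrow> real" where
  "pZ PZ a b = measure_pmf.prob PZ {A. a \<in> A \<and> b \<in> A}"

end

theory Submission
  imports Defs
begin

(* Split X_{s,t} and X_{s-k,t-l} into the contributions of the innovation cells (a, b) feeding
   them. Contributions of different cells are independent, and within one cell the number of
   thinning vectors is Poisson, so each cell contributes a compound Poisson factor
   exp(mu (E[u1^[cell feeds X_{s,t}] u2^[cell feeds X_{s-k,t-l}]] - 1)) to the joint generating
   function. Multiplying over cells gives exp(mu_X (u1 + u2 - 2) + mu_X rho (u1 - 1)(u2 - 1)),
   the generating function of (A + C, B + C). A double power series with bounded coefficients is
   determined by its values on (0,1)^2, so the two laws coincide, and the correlation is read off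
   from the first two moments of (A + C, B + C). *)

section \<open>Generating functions of nat-valued random variables\<close>

lemma (in prob_space) summable_prob_eq_nat:
  fixes N :: "'a \<Rightarrow> nat"
  assumes "N \<in> measurable M (count_space UNIV)"
  shows "summable (\<lambda>n. prob {\<omega> \<in> space M. N \<omega> = n})"
proof -
  have events: "{\<omega> \<in> space M. N \<omega> = n} \<in> sets M" for n
    using assms by (auto intro!: measurable_sets_Collect)
  have "(\<lambda>n. prob {\<omega> \<in> space M. N \<omega> = n}) sums prob (\<Union>n. {\<omega> \<in> space M. N \<omega> = n})"
    by (rule finite_measure_UNION) (use events in \<open>auto simp: disjoint_family_on_def\<close>)
  then show ?thesis by (simp add: sums_iff)
qed

lemma (in prob_space) sums_integral_partition_nat:
  fixes N :: "'a \<Rightarrow> nat" and h :: "'a \<Rightarrow> real"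
  assumes N: "N \<in> measurable M (count_space UNIV)" and h: "h \<in> borel_measurable M"
    and bounded: "\<And>\<omega>. \<omega> \<in> space M \<Longrightarrow> \<bar>h \<omega>\<bar> \<le> B"
  shows "(\<lambda>n. \<integral>\<omega>. (if N \<omega> = n then h \<omega> else 0) \<partial>M) sums (\<integral>\<omega>. h \<omega> \<partial>M)"
proof -
  have events: "{\<omega> \<in> space M. N \<omega> = n} \<in> sets M" for n
    using N by (auto intro!: measurable_sets_Collect)
  have measurable_piece: "(\<lambda>\<omega>. if N \<omega> = n then h \<omega> else 0) \<in> borel_measurable M" for n
    using N h by measurable
  obtain \<omega>\<^sub>0 where "\<omega>\<^sub>0 \<in> space M" using not_empty by blast
  then have "0 \<le> B" using bounded[of \<omega>\<^sub>0] by linarith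
  have integrable_piece: "integrable M (\<lambda>\<omega>. if N \<omega> = n then h \<omega> else 0)" for n
    by (rule integrable_const_bound[where B=B]) (use bounded \<open>0 \<le> B\<close> measurable_piece in auto)
  have piece_le: "(\<integral>\<omega>. norm (if N \<omega> = n then h \<omega> else 0) \<partial>M) \<le> B * prob {\<omega> \<in> space M. N \<omega> = n}" for n
  proof -
    have "(\<integral>\<omega>. norm (if N \<omega> = n then h \<omega> else 0) \<partial>M)
        \<le> (\<integral>\<omega>. B * indicator {\<omega> \<in> space M. N \<omega> = n} \<omega> \<partial>M)"
    proof (rule integral_mono)
      show "integrable M (\<lambda>\<omega>. B * indicator {\<omega> \<in> space M. N \<omega> = n} \<omega>)"
        using events by (intro integrable_mult_right integrable_real_indicator) (simp_all add: less_top[symmetric])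
    qed (use integrable_piece events bounded in \<open>auto simp: indicator_def\<close>)
    also have "\<dots> = B * prob {\<omega> \<in> space M. N \<omega> = n}" using events by simp
    finally show ?thesis .
  qed
  have pointwise: "(\<lambda>n. if N \<omega> = n then x else 0) sums x" for x :: real and \<omega>
    using sums_single[of "N \<omega>" "\<lambda>_. x"] by (simp add: eq_commute)
  have "(\<lambda>n. \<integral>\<omega>. (if N \<omega> = n then h \<omega> else 0) \<partial>M) sums (\<integral>\<omega>. (\<Sum>n. if N \<omega> = n then h \<omega> else 0) \<partial>M)"
  proof (rule sums_integral[OF integrable_piece])
    show "AE \<omega> in M. summable (\<lambda>n. norm (if N \<omega> = n then h \<omega> else 0))"
    proof (rule AE_I2)
      fix \<omega>
      have "(\<lambda>n. norm (if N \<omega> = n then h \<omega> else 0)) = (\<lambda>n. if N \<omega> = n then norm (h \<omega>) else 0)"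
        by auto
      then show "summable (\<lambda>n. norm (if N \<omega> = n then h \<omega> else 0))"
        using sums_summable[OF pointwise] by metis
    qed
    show "summable (\<lambda>n. \<integral>\<omega>. norm (if N \<omega> = n then h \<omega> else 0) \<partial>M)"
      by (rule summable_comparison_test[OF _ summable_mult[OF summable_prob_eq_nat[OF N], of B]])
        (use piece_le in auto)
  qed
  then show ?thesis by (simp add: sums_unique[OF pointwise, symmetric])
qed

lemma (in prob_space) pgf_on_event_sums:
  fixes Y :: "'a \<Rightarrow> nat" and v :: real
  assumes Y: "Y \<in> measurable M (count_space UNIV)" and A: "A \<in> sets M" and v: "\<bar>v\<bar> \<le> 1"
  shows "(\<lambda>n. prob (A \<inter> {\<omega> \<in> space M. Y \<omega> = n}) * v ^ n) sums (\<integral>\<omega>. indicator A \<omega> * v ^ Y \<omega> \<partial>M)"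
proof -
  have "(\<lambda>n. \<integral>\<omega>. (if Y \<omega> = n then indicator A \<omega> * v ^ Y \<omega> else 0) \<partial>M)
      sums (\<integral>\<omega>. indicator A \<omega> * v ^ Y \<omega> \<partial>M)"
    by (rule sums_integral_partition_nat[OF Y, where B=1])
      (use Y A v in \<open>auto simp: indicator_def power_abs intro: power_le_one\<close>)
  moreover have "(\<integral>\<omega>. (if Y \<omega> = n then indicator A \<omega> * v ^ Y \<omega> else 0) \<partial>M)
      = prob (A \<inter> {\<omega> \<in> space M. Y \<omega> = n}) * v ^ n" for n
  proof -
    have "A \<inter> {\<omega> \<in> space M. Y \<omega> = n} \<in> sets M" using Y A by measurable
    moreover have "(\<integral>\<omega>. (if Y \<omega> = n then indicator A \<omega> * v ^ Y \<omega> else 0) \<partial>M)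
        = (\<integral>\<omega>. v ^ n * indicator (A \<inter> {\<omega> \<in> space M. Y \<omega> = n}) \<omega> \<partial>M)"
      using sets.sets_into_space[OF A] by (intro Bochner_Integration.integral_cong) (auto simp: indicator_def)
    ultimately show ?thesis by simp
  qed
  ultimately show ?thesis by simp
qed

lemma (in prob_space) joint_pgf_sums:
  fixes X Y :: "'a \<Rightarrow> nat" and u v :: real
  assumes X: "X \<in> measurable M (count_space UNIV)" and Y: "Y \<in> measurable M (count_space UNIV)"
    and u: "\<bar>u\<bar> \<le> 1" and v: "\<bar>v\<bar> \<le> 1"
  shows "(\<lambda>m. (\<Sum>n. prob {\<omega> \<in> space M. X \<omega> = m \<and> Y \<omega> = n} * v ^ n) * u ^ m)
    sums (\<integral>\<omega>. u ^ X \<omega> * v ^ Y \<omega> \<partial>M)"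
proof -
  have "(\<lambda>m. \<integral>\<omega>. (if X \<omega> = m then u ^ X \<omega> * v ^ Y \<omega> else 0) \<partial>M) sums (\<integral>\<omega>. u ^ X \<omega> * v ^ Y \<omega> \<partial>M)"
    by (rule sums_integral_partition_nat[OF X, where B=1])
      (use X Y u v in \<open>auto simp: abs_mult power_abs intro!: mult_le_one power_le_one\<close>)
  moreover have "(\<integral>\<omega>. (if X \<omega> = m then u ^ X \<omega> * v ^ Y \<omega> else 0) \<partial>M)
      = (\<Sum>n. prob {\<omega> \<in> space M. X \<omega> = m \<and> Y \<omega> = n} * v ^ n) * u ^ m" for m
  proof -
    define A where "A = {\<omega> \<in> space M. X \<omega> = m}"
    have A: "A \<in> sets M" unfolding A_def using X by measurable
    have "(\<integral>\<omega>. (if X \<omega> = m then u ^ X \<omega> * v ^ Y \<omega> else 0) \<partial>M)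
        = (\<integral>\<omega>. u ^ m * (indicator A \<omega> * v ^ Y \<omega>) \<partial>M)"
      by (rule Bochner_Integration.integral_cong) (auto simp: A_def indicator_def)
    also have "\<dots> = u ^ m * (\<integral>\<omega>. indicator A \<omega> * v ^ Y \<omega> \<partial>M)"
      by (rule integral_mult_right_zero)
    also have "(\<integral>\<omega>. indicator A \<omega> * v ^ Y \<omega> \<partial>M) = (\<Sum>n. prob (A \<inter> {\<omega> \<in> space M. Y \<omega> = n}) * v ^ n)"
      using pgf_on_event_sums[OF Y A v] by (simp add: sums_iff)
    also have "(\<lambda>n. A \<inter> {\<omega> \<in> space M. Y \<omega> = n}) = (\<lambda>n. {\<omega> \<in> space M. X \<omega> = m \<and> Y \<omega> = n})"
      by (auto simp: A_def)
    finally show ?thesis by simp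
  qed
  ultimately show ?thesis by simp
qed

lemma summable_bounded_powser:
  fixes f :: "nat \<Rightarrow> real"
  assumes "\<And>n. \<bar>f n\<bar> \<le> C" and "\<bar>u\<bar> < 1"
  shows "summable (\<lambda>n. f n * u ^ n)"
proof (rule summable_comparison_test[OF _ summable_mult[OF summable_geometric[of "\<bar>u\<bar>"], of C]])
  show "\<exists>N. \<forall>n\<ge>N. norm (f n * u ^ n) \<le> C * \<bar>u\<bar> ^ n"
    using assms by (auto simp: abs_mult power_abs intro!: mult_right_mono)
qed (use assms in auto)

lemma powser_coeffs_unique:
  fixes c d :: "nat \<Rightarrow> real"
  assumes c: "\<And>n. \<bar>c n\<bar> \<le> B" and d: "\<And>n. \<bar>d n\<bar> \<le> B"
    and eq: "\<And>u. 0 < u \<Longrightarrow> u < 1 \<Longrightarrow> (\<Sum>n. c n * u ^ n) = (\<Sum>n. d n * u ^ n)"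
  shows "c = d"
proof -
  define e where "e n = c n - d n" for n
  have e_bounded: "\<bar>e n\<bar> \<le> 2 * B" for n using c[of n] d[of n] by (simp add: e_def)
  have e_powser: "(\<Sum>n. e n * u ^ n) = 0" if "0 < u" "u < 1" for u
  proof -
    have "(\<Sum>n. e n * u ^ n) = (\<Sum>n. c n * u ^ n - d n * u ^ n)" by (simp add: e_def algebra_simps)
    also have "\<dots> = (\<Sum>n. c n * u ^ n) - (\<Sum>n. d n * u ^ n)"
      by (rule suminf_diff[symmetric]; rule summable_bounded_powser) (use that c d in auto)
    finally show ?thesis using eq[OF that] by simp
  qed
  have "e m = 0" for m
  proof (induction m rule: less_induct)
    case (less m)
    \<comment> \<open>Divide out \<open>u ^ m\<close> and let \<open>u \<rightarrow> 0\<close>.\<close>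
    define f where "f x = (\<Sum>n. e (n + m) * x ^ n)" for x :: real
    have f_zero: "f u = 0" if "0 < u" "u < 1" for u
    proof -
      have "(\<Sum>n. e n * u ^ n) = (\<Sum>n. e (n + m) * u ^ (n + m)) + (\<Sum>n<m. e n * u ^ n)"
        by (rule suminf_split_initial_segment) (rule summable_bounded_powser[OF e_bounded], use that in auto)
      also have "(\<Sum>n<m. e n * u ^ n) = 0" using less by simp
      also have "(\<Sum>n. e (n + m) * u ^ (n + m)) = (\<Sum>n. u ^ m * (e (n + m) * u ^ n))"
        by (simp add: power_add algebra_simps)
      also have "\<dots> = u ^ m * f u"
        unfolding f_def by (rule suminf_mult) (rule summable_bounded_powser[OF e_bounded], use that in auto)
      finally show ?thesis using e_powser[OF that] that by simp
    qed
    have "isCont f 0"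
      unfolding f_def by (rule isCont_powser[where K="1/2"]) (rule summable_bounded_powser[OF e_bounded], auto)
    then have "(f \<longlongrightarrow> f 0) (at_right 0)"
      by (simp add: isCont_def tendsto_mono[OF at_within_le_at])
    moreover have "(f \<longlongrightarrow> 0) (at_right 0)"
      by (rule tendsto_eventually) (auto simp: eventually_at_right_field intro!: exI[of _ 1] f_zero)
    ultimately have "f 0 = 0" by (rule tendsto_unique[OF trivial_limit_at_right_real])
    then show ?case by (simp add: f_def)
  qed
  then show ?thesis by (auto simp: e_def fun_eq_iff)
qed

lemma powser2_coeffs_unique:
  fixes a b :: "nat \<Rightarrow> nat \<Rightarrow> real"
  assumes a: "\<And>m n. \<bar>a m n\<bar> \<le> 1" and b: "\<And>m n. \<bar>b m n\<bar> \<le> 1"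
    and eq: "\<And>u v. 0 < u \<Longrightarrow> u < 1 \<Longrightarrow> 0 < v \<Longrightarrow> v < 1 \<Longrightarrow>
       (\<Sum>m. (\<Sum>n. a m n * v ^ n) * u ^ m) = (\<Sum>m. (\<Sum>n. b m n * v ^ n) * u ^ m)"
  shows "a = b"
proof -
  have row_bound: "\<bar>\<Sum>n. f n * v ^ n\<bar> \<le> 1 / (1 - v)"
    if "\<And>n. \<bar>f n\<bar> \<le> 1" "0 < v" "v < 1" for f :: "nat \<Rightarrow> real" and v
  proof -
    have geometric: "summable (\<lambda>n. v ^ n)" using that by (simp add: summable_geometric)
    have le: "norm (f n * v ^ n) \<le> v ^ n" for n
      using that by (auto simp: abs_mult intro!: mult_left_le_one_le)
    have abs_summable: "summable (\<lambda>n. norm (f n * v ^ n))"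
      by (rule summable_comparison_test[OF _ geometric]) (use le in auto)
    have "\<bar>\<Sum>n. f n * v ^ n\<bar> \<le> (\<Sum>n. norm (f n * v ^ n))"
      using summable_norm[OF abs_summable] by simp
    also have "\<dots> \<le> (\<Sum>n. v ^ n)" by (rule suminf_le[OF le abs_summable geometric])
    also have "\<dots> = 1 / (1 - v)" using suminf_geometric[of v] that by simp
    finally show ?thesis .
  qed
  have rows: "(\<lambda>m. \<Sum>n. a m n * v ^ n) = (\<lambda>m. \<Sum>n. b m n * v ^ n)" if "0 < v" "v < 1" for v
    by (rule powser_coeffs_unique[where B="1 / (1 - v)"]) (use that a b eq row_bound in auto)
  have "a m = b m" for m
    by (rule powser_coeffs_unique[where B=1]) (use a b fun_cong[OF rows] in auto)
  then show ?thesis by auto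
qed

lemma measurable_pair_nat:
  fixes X Y :: "'a \<Rightarrow> nat"
  assumes X: "X \<in> measurable M (count_space UNIV)" and Y: "Y \<in> measurable M (count_space UNIV)"
  shows "(\<lambda>\<omega>. (X \<omega>, Y \<omega>)) \<in> measurable M (count_space UNIV)"
proof (subst measurable_count_space_eq2_countable, intro conjI ballI)
  fix p :: "nat \<times> nat"
  have "(\<lambda>\<omega>. (X \<omega>, Y \<omega>)) -` {p} \<inter> space M = {\<omega> \<in> space M. X \<omega> = fst p \<and> Y \<omega> = snd p}"
    by (cases p) auto
  also have "\<dots> \<in> sets M" using X Y by measurable
  finally show "(\<lambda>\<omega>. (X \<omega>, Y \<omega>)) -` {p} \<inter> space M \<in> sets M" .
qed auto

lemma distr_pair_eq_if_joint_pgf_eq: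
  fixes X Y :: "'a \<Rightarrow> nat" and Q :: "(nat \<times> nat) pmf"
  assumes "prob_space M"
    and X: "X \<in> measurable M (count_space UNIV)" and Y: "Y \<in> measurable M (count_space UNIV)"
    and eq: "\<And>u v :: real. 0 < u \<Longrightarrow> u < 1 \<Longrightarrow> 0 < v \<Longrightarrow> v < 1 \<Longrightarrow>
       (\<integral>\<omega>. u ^ X \<omega> * v ^ Y \<omega> \<partial>M) = (\<integral>x. u ^ fst x * v ^ snd x \<partial>measure_pmf Q)"
  shows "distr M (count_space UNIV) (\<lambda>\<omega>. (X \<omega>, Y \<omega>)) = measure_pmf Q"
proof -
  interpret prob_space M by fact
  define a where "a m n = prob {\<omega> \<in> space M. X \<omega> = m \<and> Y \<omega> = n}" for m n
  define b where "b m n = measure_pmf.prob Q {x \<in> space (measure_pmf Q). fst x = m \<and> snd x = n}" for m n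
  have b_pmf: "b m n = pmf Q (m, n)" for m n
  proof -
    have "{x \<in> space (measure_pmf Q). fst x = m \<and> snd x = n} = {(m, n)}" by auto
    then show ?thesis by (simp add: b_def measure_pmf_single)
  qed
  have "a = b"
  proof (rule powser2_coeffs_unique)
    fix u v :: real assume uv: "0 < u" "u < 1" "0 < v" "v < 1"
    have "(\<lambda>m. (\<Sum>n. a m n * v ^ n) * u ^ m) sums (\<integral>\<omega>. u ^ X \<omega> * v ^ Y \<omega> \<partial>M)"
      unfolding a_def by (rule joint_pgf_sums[OF X Y]) (use uv in auto)
    moreover have "(\<lambda>m. (\<Sum>n. b m n * v ^ n) * u ^ m) sums (\<integral>x. u ^ fst x * v ^ snd x \<partial>measure_pmf Q)"
      unfolding b_def by (rule measure_pmf.joint_pgf_sums) (use uv in auto)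
    ultimately show "(\<Sum>m. (\<Sum>n. a m n * v ^ n) * u ^ m) = (\<Sum>m. (\<Sum>n. b m n * v ^ n) * u ^ m)"
      using eq[OF uv] by (simp add: sums_iff)
  qed (simp_all add: a_def b_def)
  have XY: "(\<lambda>\<omega>. (X \<omega>, Y \<omega>)) \<in> measurable M (count_space UNIV)"
    by (rule measurable_pair_nat[OF X Y])
  show ?thesis
  proof (rule measure_eqI_countable[where A=UNIV])
    fix p :: "nat \<times> nat"
    obtain m n where p: "p = (m, n)" by (cases p)
    have "emeasure (distr M (count_space UNIV) (\<lambda>\<omega>. (X \<omega>, Y \<omega>))) {p}
        = emeasure M {\<omega> \<in> space M. X \<omega> = m \<and> Y \<omega> = n}"
      by (subst emeasure_distr[OF XY]) (auto simp: p intro!: arg_cong[where f="emeasure M"])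
    also have "\<dots> = ennreal (b m n)"
      using fun_cong[OF fun_cong[OF \<open>a = b\<close>, of m], of n] by (simp add: a_def emeasure_eq_measure)
    also have "\<dots> = emeasure (measure_pmf Q) {p}" by (simp add: b_pmf p emeasure_pmf_single)
    finally show "emeasure (distr M (count_space UNIV) (\<lambda>\<omega>. (X \<omega>, Y \<omega>))) {p} = emeasure (measure_pmf Q) {p}" .
  qed auto
qed

section \<open>Poisson and bivariate Poisson laws\<close>

lemma pmf_poi: "0 \<le> r \<Longrightarrow> pmf (poi r) n = r ^ n / fact n * exp (- r)"
  by (cases "r = 0") (auto simp: poi_def pmf_return power_0_left)

lemma poi_pgf_sums:
  assumes "0 \<le> r"
  shows "(\<lambda>n. pmf (poi r) n * x ^ n) sums exp (r * (x - 1))"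
proof -
  have "(\<lambda>n. exp (- r) * ((r * x) ^ n /\<^sub>R fact n)) sums (exp (- r) * exp (r * x))"
    by (rule sums_mult[OF exp_converges])
  moreover have "exp (- r) * exp (r * x) = exp (r * (x - 1))"
    unfolding mult_exp_exp by (simp add: algebra_simps)
  ultimately show ?thesis
    by (simp add: pmf_poi[OF assms] power_mult_distrib divide_inverse mult_ac)
qed

lemma integrable_sums_pmf_nat:
  fixes p :: "nat pmf" and f :: "nat \<Rightarrow> real"
  assumes "summable (\<lambda>n. \<bar>pmf p n * f n\<bar>)"
  shows "integrable (measure_pmf p) f" and "(\<lambda>n. pmf p n * f n) sums (\<integral>x. f x \<partial>measure_pmf p)"
proof -
  have integrable_count: "integrable (count_space UNIV) (\<lambda>n. pmf p n * f n)"
    using assms by (simp add: integrable_count_space_nat_iff)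
  then show "integrable (measure_pmf p) f"
    by (simp add: measure_pmf_eq_density integrable_density)
  have "(\<integral>x. f x \<partial>measure_pmf p) = (\<integral>x. pmf p x * f x \<partial>count_space UNIV)"
    by (simp add: measure_pmf_eq_density integral_density)
  then show "(\<lambda>n. pmf p n * f n) sums (\<integral>x. f x \<partial>measure_pmf p)"
    using sums_integral_count_space_nat[OF integrable_count] by simp
qed

lemma has_bochner_integral_poi_pgf:
  assumes r: "0 \<le> r"
  shows "has_bochner_integral (measure_pmf (poi r)) (\<lambda>n. x ^ n) (exp (r * (x - 1)))"
proof -
  have "summable (\<lambda>n. \<bar>pmf (poi r) n * x ^ n\<bar>)"
    using sums_summable[OF poi_pgf_sums[OF r, of "\<bar>x\<bar>"]] by (simp add: abs_mult power_abs)
  then show ?thesis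
    using integrable_sums_pmf_nat poi_pgf_sums[OF r, of x] has_bochner_integral_iff sums_unique2 by metis
qed

lemma poi_mean_sums:
  assumes r: "0 \<le> r"
  shows "(\<lambda>n. pmf (poi r) n * real n) sums r"
proof -
  have "(\<lambda>n. pmf (poi r) (Suc n) * real (Suc n)) = (\<lambda>n. r * pmf (poi r) n)"
    by (rule ext) (simp add: pmf_poi[OF r] fact_Suc field_simps del: of_nat_Suc)
  moreover have "(\<lambda>n. r * pmf (poi r) n) sums r"
    using sums_mult[OF poi_pgf_sums[OF r, of 1], of r] by simp
  ultimately have "(\<lambda>n. pmf (poi r) (Suc n) * real (Suc n)) sums r" by simp
  then show ?thesis by (subst (asm) sums_Suc_iff) simp
qed

lemma poi_second_factorial_moment_sums:
  assumes r: "0 \<le> r"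
  shows "(\<lambda>n. pmf (poi r) n * (real n * (real n - 1))) sums r\<^sup>2"
proof -
  let ?f = "\<lambda>n. pmf (poi r) n * (real n * (real n - 1))"
  have "real (Suc (Suc n)) * (real (Suc (Suc n)) - 1) = real (Suc (Suc n)) * real (Suc n)" for n
    by simp
  then have "(\<lambda>n. ?f (Suc (Suc n))) = (\<lambda>n. r\<^sup>2 * pmf (poi r) n)"
    by (intro ext) (simp add: pmf_poi[OF r] field_simps power2_eq_square del: of_nat_Suc)
  moreover have "(\<lambda>n. r\<^sup>2 * pmf (poi r) n) sums r\<^sup>2"
    using sums_mult[OF poi_pgf_sums[OF r, of 1], of "r\<^sup>2"] by simp
  ultimately have "(\<lambda>n. ?f (Suc (Suc n))) sums r\<^sup>2" by simp
  then show ?thesis by (subst (asm) sums_Suc_iff, subst (asm) sums_Suc_iff) simp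
qed

lemma poi_moments:
  assumes r: "0 \<le> r"
  shows "has_bochner_integral (measure_pmf (poi r)) (\<lambda>n. real n) r"
    and "has_bochner_integral (measure_pmf (poi r)) (\<lambda>n. (real n)\<^sup>2) (r\<^sup>2 + r)"
proof -
  have second: "(\<lambda>n. pmf (poi r) n * (real n)\<^sup>2) sums (r\<^sup>2 + r)"
    using sums_add[OF poi_second_factorial_moment_sums[OF r] poi_mean_sums[OF r]]
    by (simp add: algebra_simps power2_eq_square)
  show "has_bochner_integral (measure_pmf (poi r)) (\<lambda>n. real n) r"
    using integrable_sums_pmf_nat[of "poi r" real] poi_mean_sums[OF r]
    by (auto simp: has_bochner_integral_iff sums_iff dest: sums_unique2)
  show "has_bochner_integral (measure_pmf (poi r)) (\<lambda>n. (real n)\<^sup>2) (r\<^sup>2 + r)"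
    using integrable_sums_pmf_nat[of "poi r" "\<lambda>n. (real n)\<^sup>2"] second
    by (auto simp: has_bochner_integral_iff sums_iff dest: sums_unique2)
qed

lemma has_bochner_integral_pair_pmf_mult:
  fixes f :: "'a \<Rightarrow> real" and g :: "'b \<Rightarrow> real"
  assumes f: "has_bochner_integral (measure_pmf p) f a" and g: "has_bochner_integral (measure_pmf q) g b"
    and nonneg: "\<And>x. 0 \<le> f x" "\<And>y. 0 \<le> g y"
  shows "has_bochner_integral (measure_pmf (pair_pmf p q)) (\<lambda>z. f (fst z) * g (snd z)) (a * b)"
proof -
  have "0 \<le> a" "0 \<le> b"
    using f g nonneg by (auto simp: has_bochner_integral_iff intro!: integral_nonneg_AE)
  have "(\<integral>\<^sup>+z. ennreal (f (fst z) * g (snd z)) \<partial>measure_pmf (pair_pmf p q))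
      = (\<integral>\<^sup>+x. ennreal (f x) * (\<integral>\<^sup>+y. ennreal (g y) \<partial>measure_pmf q) \<partial>measure_pmf p)"
    by (simp add: nn_integral_pair_pmf' ennreal_mult nonneg nn_integral_cmult)
  also have "\<dots> = (\<integral>\<^sup>+x. ennreal (f x) \<partial>measure_pmf p) * (\<integral>\<^sup>+y. ennreal (g y) \<partial>measure_pmf q)"
    by (simp add: nn_integral_multc)
  also have "\<dots> = ennreal (a * b)"
    using f g nonneg \<open>0 \<le> a\<close> \<open>0 \<le> b\<close>
    by (simp add: has_bochner_integral_iff nn_integral_eq_integral ennreal_mult)
  finally show ?thesis
    using nonneg \<open>0 \<le> a\<close> \<open>0 \<le> b\<close>
    by (intro has_bochner_integral_nn_integral) auto
qed

lemma has_bochner_integral_pair_pmf_mult3: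
  fixes f g h :: "_ \<Rightarrow> real"
  assumes "has_bochner_integral (measure_pmf p) f a" "has_bochner_integral (measure_pmf q) g b"
    "has_bochner_integral (measure_pmf r) h c"
    and "\<And>x. 0 \<le> f x" "\<And>y. 0 \<le> g y" "\<And>z. 0 \<le> h z"
  shows "has_bochner_integral (measure_pmf (pair_pmf p (pair_pmf q r)))
    (\<lambda>x. f (fst x) * (g (fst (snd x)) * h (snd (snd x)))) (a * (b * c))"
  using has_bochner_integral_pair_pmf_mult[OF assms(1) has_bochner_integral_pair_pmf_mult[OF assms(2,3)]]
    assms(4-6) by simp

definition bivariate_poisson :: "real \<Rightarrow> real \<Rightarrow> (nat \<times> nat) pmf" where
  "bivariate_poisson a c =
     map_pmf (\<lambda>(x, y, z). (x + z, y + z)) (pair_pmf (poi a) (pair_pmf (poi a) (poi c)))"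

lemma bivariate_poisson_pgf:
  assumes a: "0 \<le> a" and c: "0 \<le> c" and u: "0 \<le> u" "u \<le> 1" and v: "0 \<le> v" "v \<le> 1"
  shows "(\<integral>x. u ^ fst x * v ^ snd x \<partial>measure_pmf (bivariate_poisson a c))
    = exp (a * (u - 1)) * (exp (a * (v - 1)) * exp (c * (u * v - 1)))"
proof -
  have "0 \<le> u * v" "u * v \<le> 1" using u v by (auto intro: mult_le_one)
  then have "has_bochner_integral (measure_pmf (pair_pmf (poi a) (pair_pmf (poi a) (poi c))))
      (\<lambda>x. u ^ fst x * (v ^ fst (snd x) * (u * v) ^ snd (snd x)))
      (exp (a * (u - 1)) * (exp (a * (v - 1)) * exp (c * (u * v - 1))))"
    using u v by (intro has_bochner_integral_pair_pmf_mult3 has_bochner_integral_poi_pgf a c) auto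
  then show ?thesis
    by (simp add: bivariate_poisson_def has_bochner_integral_iff split_beta power_add
        power_mult_distrib algebra_simps)
qed

lemma bivariate_poisson_moments:
  assumes a: "0 \<le> a" and c: "0 \<le> c"
  shows "has_bochner_integral (measure_pmf (bivariate_poisson a c)) (\<lambda>z. real (fst z)) (a + c)"
    and "has_bochner_integral (measure_pmf (bivariate_poisson a c)) (\<lambda>z. real (snd z)) (a + c)"
    and "has_bochner_integral (measure_pmf (bivariate_poisson a c)) (\<lambda>z. (real (fst z))\<^sup>2) ((a + c)\<^sup>2 + (a + c))"
    and "has_bochner_integral (measure_pmf (bivariate_poisson a c)) (\<lambda>z. (real (snd z))\<^sup>2) ((a + c)\<^sup>2 + (a + c))"
    and "has_bochner_integral (measure_pmf (bivariate_poisson a c)) (\<lambda>z. real (fst z) * real (snd z)) ((a + c)\<^sup>2 + c)"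
proof -
  let ?T = "pair_pmf (poi a) (pair_pmf (poi a) (poi c))"
  have via_triple: "has_bochner_integral (measure_pmf (bivariate_poisson a c)) F e"
    if "has_bochner_integral (measure_pmf ?T) (\<lambda>x. F (fst x + snd (snd x), fst (snd x) + snd (snd x))) e"
    for F :: "nat \<times> nat \<Rightarrow> real" and e
    using that by (simp add: bivariate_poisson_def has_bochner_integral_iff split_beta)
  have one: "has_bochner_integral (measure_pmf p) (\<lambda>_. 1) (1::real)" for p :: "nat pmf"
    by (simp add: has_bochner_integral_iff)
  note moments = poi_moments[OF a] poi_moments[OF c]
  note triple = has_bochner_integral_pair_pmf_mult3[where p="poi a" and q="poi a" and r="poi c"]
  \<comment> \<open>Monomials in \<open>(x, y, z)\<close> integrate factorwise; a factor \<open>1\<close> marks an absent variable.\<close>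
  have A: "has_bochner_integral (measure_pmf ?T) (\<lambda>x. real (fst x) * (1 * 1)) (a * (1 * 1))"
    and B: "has_bochner_integral (measure_pmf ?T) (\<lambda>x. 1 * (real (fst (snd x)) * 1)) (1 * (a * 1))"
    and C: "has_bochner_integral (measure_pmf ?T) (\<lambda>x. 1 * (1 * real (snd (snd x)))) (1 * (1 * c))"
    and A2: "has_bochner_integral (measure_pmf ?T) (\<lambda>x. (real (fst x))\<^sup>2 * (1 * 1)) ((a\<^sup>2 + a) * (1 * 1))"
    and B2: "has_bochner_integral (measure_pmf ?T) (\<lambda>x. 1 * ((real (fst (snd x)))\<^sup>2 * 1)) (1 * ((a\<^sup>2 + a) * 1))"
    and C2: "has_bochner_integral (measure_pmf ?T) (\<lambda>x. 1 * (1 * (real (snd (snd x)))\<^sup>2)) (1 * (1 * (c\<^sup>2 + c)))"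
    and AB: "has_bochner_integral (measure_pmf ?T) (\<lambda>x. real (fst x) * (real (fst (snd x)) * 1)) (a * (a * 1))"
    and AC: "has_bochner_integral (measure_pmf ?T) (\<lambda>x. real (fst x) * (1 * real (snd (snd x)))) (a * (1 * c))"
    and BC: "has_bochner_integral (measure_pmf ?T) (\<lambda>x. 1 * (real (fst (snd x)) * real (snd (snd x)))) (1 * (a * c))"
    by (rule triple; auto intro: moments one)+
  show "has_bochner_integral (measure_pmf (bivariate_poisson a c)) (\<lambda>z. real (fst z)) (a + c)"
    by (rule via_triple) (use has_bochner_integral_add[OF A C] in simp)
  show "has_bochner_integral (measure_pmf (bivariate_poisson a c)) (\<lambda>z. real (snd z)) (a + c)"
    by (rule via_triple) (use has_bochner_integral_add[OF B C] in simp)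
  show "has_bochner_integral (measure_pmf (bivariate_poisson a c)) (\<lambda>z. (real (fst z))\<^sup>2) ((a + c)\<^sup>2 + (a + c))"
    by (rule via_triple)
      (use has_bochner_integral_add[OF has_bochner_integral_add[OF has_bochner_integral_add[OF A2 AC] AC] C2]
        in \<open>simp add: power2_eq_square algebra_simps\<close>)
  show "has_bochner_integral (measure_pmf (bivariate_poisson a c)) (\<lambda>z. (real (snd z))\<^sup>2) ((a + c)\<^sup>2 + (a + c))"
    by (rule via_triple)
      (use has_bochner_integral_add[OF has_bochner_integral_add[OF has_bochner_integral_add[OF B2 BC] BC] C2]
        in \<open>simp add: power2_eq_square algebra_simps\<close>)
  show "has_bochner_integral (measure_pmf (bivariate_poisson a c)) (\<lambda>z. real (fst z) * real (snd z)) ((a + c)\<^sup>2 + c)"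
    by (rule via_triple)
      (use has_bochner_integral_add[OF has_bochner_integral_add[OF has_bochner_integral_add[OF AB AC] BC] C2]
        in \<open>simp add: power2_eq_square algebra_simps\<close>)
qed

section \<open>Correlation\<close>

lemma corr_commute: "corr M U V = corr M V U"
  by (simp add: corr_def mult.commute)

lemma corr_eq_from_moments:
  fixes U V :: "'a \<Rightarrow> real"
  assumes "prob_space M"
    and U: "has_bochner_integral M U m" and V: "has_bochner_integral M V m"
    and U2: "has_bochner_integral M (\<lambda>\<omega>. (U \<omega>)\<^sup>2) (m\<^sup>2 + m)"
    and V2: "has_bochner_integral M (\<lambda>\<omega>. (V \<omega>)\<^sup>2) (m\<^sup>2 + m)"
    and UV: "has_bochner_integral M (\<lambda>\<omega>. U \<omega> * V \<omega>) (m\<^sup>2 + c)"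
    and "0 < m"
  shows "corr M U V = c / m"
proof -
  interpret prob_space M by fact
  have const: "has_bochner_integral M (\<lambda>_. x) x" for x :: real
    by (simp add: has_bochner_integral_iff prob_space)
  have "has_bochner_integral M (\<lambda>\<omega>. U \<omega> * V \<omega> - m * U \<omega> - m * V \<omega> + m\<^sup>2) ((m\<^sup>2 + c) - m * m - m * m + m\<^sup>2)"
    by (intro has_bochner_integral_add has_bochner_integral_diff has_bochner_integral_mult_right UV U V const)
  then have cov: "(\<integral>\<omega>. (U \<omega> - m) * (V \<omega> - m) \<partial>M) = c"
    by (simp add: has_bochner_integral_iff algebra_simps power2_eq_square)
  have "has_bochner_integral M (\<lambda>\<omega>. (U \<omega>)\<^sup>2 - m * U \<omega> - m * U \<omega> + m\<^sup>2) ((m\<^sup>2 + m) - m * m - m * m + m\<^sup>2)"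
    by (intro has_bochner_integral_add has_bochner_integral_diff has_bochner_integral_mult_right U2 U const)
  then have var_U: "(\<integral>\<omega>. (U \<omega> - m)\<^sup>2 \<partial>M) = m"
    by (simp add: has_bochner_integral_iff algebra_simps power2_eq_square)
  have "has_bochner_integral M (\<lambda>\<omega>. (V \<omega>)\<^sup>2 - m * V \<omega> - m * V \<omega> + m\<^sup>2) ((m\<^sup>2 + m) - m * m - m * m + m\<^sup>2)"
    by (intro has_bochner_integral_add has_bochner_integral_diff has_bochner_integral_mult_right V2 V const)
  then have var_V: "(\<integral>\<omega>. (V \<omega> - m)\<^sup>2 \<partial>M) = m"
    by (simp add: has_bochner_integral_iff algebra_simps power2_eq_square)
  have "(\<integral>x. U x \<partial>M) = m" "(\<integral>x. V x \<partial>M) = m"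
    using U V by (simp_all add: has_bochner_integral_integral_eq)
  then show ?thesis
    unfolding corr_def using cov var_U var_V \<open>0 < m\<close> by simp
qed

lemma has_bochner_integral_distr_pmf:
  fixes F :: "'b \<Rightarrow> real"
  assumes G: "G \<in> measurable M (count_space UNIV)"
    and distr: "distr M (count_space UNIV) G = measure_pmf Q"
    and "has_bochner_integral (measure_pmf Q) F e"
  shows "has_bochner_integral M (\<lambda>\<omega>. F (G \<omega>)) e"
proof -
  have "has_bochner_integral (distr M (count_space UNIV) G) F e" using assms(3) distr by simp
  then show ?thesis
    using G by (simp add: has_bochner_integral_iff integrable_distr_eq integral_distr)
qed

lemma corr_bivariate_poisson:
  fixes U V :: "'a \<Rightarrow> nat"
  assumes "prob_space M" and UV: "(\<lambda>\<omega>. (U \<omega>, V \<omega>)) \<in> measurable M (count_space UNIV)"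
    and distr: "distr M (count_space UNIV) (\<lambda>\<omega>. (U \<omega>, V \<omega>)) = measure_pmf (bivariate_poisson a c)"
    and a: "0 \<le> a" and c: "0 \<le> c" and "0 < a + c"
  shows "corr M (\<lambda>\<omega>. real (U \<omega>)) (\<lambda>\<omega>. real (V \<omega>)) = c / (a + c)"
proof -
  note transfer = has_bochner_integral_distr_pmf[OF UV distr]
  note moments = bivariate_poisson_moments[OF a c]
  have "has_bochner_integral M (\<lambda>\<omega>. real (U \<omega>)) (a + c)"
    and "has_bochner_integral M (\<lambda>\<omega>. real (V \<omega>)) (a + c)"
    and "has_bochner_integral M (\<lambda>\<omega>. (real (U \<omega>))\<^sup>2) ((a + c)\<^sup>2 + (a + c))"
    and "has_bochner_integral M (\<lambda>\<omega>. (real (V \<omega>))\<^sup>2) ((a + c)\<^sup>2 + (a + c))"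
    and "has_bochner_integral M (\<lambda>\<omega>. real (U \<omega>) * real (V \<omega>)) ((a + c)\<^sup>2 + c)"
    using transfer[OF moments(1)] transfer[OF moments(2)] transfer[OF moments(3)]
      transfer[OF moments(4)] transfer[OF moments(5)] by simp_all
  then show ?thesis using corr_eq_from_moments[OF \<open>prob_space M\<close>] \<open>0 < a + c\<close> by blast
qed

section \<open>Cells of the INMA field\<close>

text \<open>Cell \<open>c = (s - i, t - j)\<close> feeds \<open>inma_field q1 q2 eps Z s t\<close> through the component
  \<open>(i, j) = cell_lag s t c\<close> of its thinning vectors.\<close>

definition cell_box :: "nat \<Rightarrow> nat \<Rightarrow> int \<Rightarrow> int \<Rightarrow> (int \<times> int) set" where
  "cell_box q1 q2 s t = (\<lambda>(i, j). (s - int i, t - int j)) ` ({0..q1} \<times> {0..q2})"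

definition cell_lag :: "int \<Rightarrow> int \<Rightarrow> int \<times> int \<Rightarrow> nat \<times> nat" where
  "cell_lag s t c = (nat (s - fst c), nat (t - snd c))"

lemma inj_on_cell_shift: "inj_on (\<lambda>(i::nat, j::nat). (s - int i, t - int j)) A"
  by (auto simp: inj_on_def)

lemma finite_cell_box [simp]: "finite (cell_box q1 q2 s t)"
  by (simp add: cell_box_def)

lemma sum_cell_box:
  "(\<Sum>c\<in>cell_box q1 q2 s t. f (cell_lag s t c)) = (\<Sum>i\<in>{0..q1}. \<Sum>j\<in>{0..q2}. f (i, j))"
  unfolding cell_box_def
  by (subst sum.reindex[OF inj_on_cell_shift]) (simp add: cell_lag_def sum.cartesian_product case_prod_beta)

lemma cell_box_inter:
  "cell_box q1 q2 s t \<inter> cell_box q1 q2 (s - int k) (t - int l)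
     = (\<lambda>(i, j). (s - int i, t - int j)) ` ({k..q1} \<times> {l..q2})"
proof (intro equalityI subsetI)
  fix c assume "c \<in> cell_box q1 q2 s t \<inter> cell_box q1 q2 (s - int k) (t - int l)"
  then have c: "c \<in> cell_box q1 q2 s t" "c \<in> cell_box q1 q2 (s - int k) (t - int l)" by auto
  obtain i j where ij: "i \<le> q1" "j \<le> q2" "c = (s - int i, t - int j)"
    using c(1) unfolding cell_box_def by auto
  obtain i' j' where "c = (s - int k - int i', t - int l - int j')"
    using c(2) unfolding cell_box_def by auto
  with ij have "i = k + i'" "j = l + j'" by auto
  with ij show "c \<in> (\<lambda>(i, j). (s - int i, t - int j)) ` ({k..q1} \<times> {l..q2})"
    by (intro image_eqI[where x="(i, j)"]) auto
next
  fix c assume "c \<in> (\<lambda>(i, j). (s - int i, t - int j)) ` ({k..q1} \<times> {l..q2})"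
  then obtain i j where ij: "k \<le> i" "i \<le> q1" "l \<le> j" "j \<le> q2" "c = (s - int i, t - int j)"
    by auto
  have "c \<in> cell_box q1 q2 s t"
    unfolding cell_box_def by (rule image_eqI[where x="(i, j)"]) (use ij in auto)
  moreover have "c \<in> cell_box q1 q2 (s - int k) (t - int l)"
    unfolding cell_box_def by (rule image_eqI[where x="(i - k, j - l)"]) (use ij in auto)
  ultimately show "c \<in> cell_box q1 q2 s t \<inter> cell_box q1 q2 (s - int k) (t - int l)" by blast
qed

lemma sum_cell_box_inter:
  "(\<Sum>c\<in>cell_box q1 q2 s t \<inter> cell_box q1 q2 (s - int k) (t - int l).
      f (cell_lag s t c) (cell_lag (s - int k) (t - int l) c))
    = (\<Sum>i\<in>{k..q1}. \<Sum>j\<in>{l..q2}. f (i, j) (i - k, j - l))"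
  unfolding cell_box_inter
  by (subst sum.reindex[OF inj_on_cell_shift])
    (auto simp: cell_lag_def sum.cartesian_product case_prod_beta nat_diff_distrib intro!: sum.cong)

lemma inma_field_eq_sum_cells:
  assumes "finite C" and "cell_box q1 q2 s t \<subseteq> C"
  shows "inma_field q1 q2 eps Z s t \<omega> = (\<Sum>c\<in>C. \<Sum>r\<in>{1..eps c \<omega>}.
    if c \<in> cell_box q1 q2 s t \<and> cell_lag s t c \<in> Z (fst c, snd c, r) \<omega> then 1 else 0)"
proof -
  have "inma_field q1 q2 eps Z s t \<omega> = (\<Sum>c\<in>cell_box q1 q2 s t. \<Sum>r\<in>{1..eps c \<omega>}.
      if cell_lag s t c \<in> Z (fst c, snd c, r) \<omega> then 1 else 0)"
    unfolding cell_box_def inma_field_def Zcomp_def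
    by (subst sum.reindex[OF inj_on_cell_shift]) (simp add: cell_lag_def sum.cartesian_product case_prod_beta)
  also have "\<dots> = (\<Sum>c\<in>C. \<Sum>r\<in>{1..eps c \<omega>}.
      if c \<in> cell_box q1 q2 s t \<and> cell_lag s t c \<in> Z (fst c, snd c, r) \<omega> then 1 else 0)"
    by (rule sum.mono_neutral_cong_left) (use assms in auto)
  finally show ?thesis .
qed

lemma inma_field_pow_mult:
  fixes q1 q2 :: nat and s t s' t' :: int and u1 u2 :: real
  defines "B1 \<equiv> cell_box q1 q2 s t" and "B2 \<equiv> cell_box q1 q2 s' t'"
  shows "u1 ^ inma_field q1 q2 eps Z s t \<omega> * u2 ^ inma_field q1 q2 eps Z s' t' \<omega>
    = (\<Prod>c\<in>B1 \<union> B2. \<Prod>r\<in>{1..eps c \<omega>}.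
         u1 ^ (if c \<in> B1 \<and> cell_lag s t c \<in> Z (fst c, snd c, r) \<omega> then 1 else 0)
       * u2 ^ (if c \<in> B2 \<and> cell_lag s' t' c \<in> Z (fst c, snd c, r) \<omega> then 1 else 0))"
  using inma_field_eq_sum_cells[of "B1 \<union> B2" q1 q2 s t eps Z \<omega>]
    inma_field_eq_sum_cells[of "B1 \<union> B2" q1 q2 s' t' eps Z \<omega>]
  by (simp add: B1_def B2_def power_sum prod.distrib)

text \<open>In the notation of the paper, \<open>thinning_mass\<close> is \<open>\<beta>\<^sub>\<bullet>\<close> and \<open>overlap_mass\<close> is
  \<open>\<beta>\<^sub>\<bullet> \<rho>(k, l)\<close>.\<close>

definition thinning_mass :: "(nat \<times> nat) set pmf \<Rightarrow> nat \<Rightarrow> nat \<Rightarrow> real" where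
  "thinning_mass PZ q1 q2 = (\<Sum>i\<in>{0..q1}. \<Sum>j\<in>{0..q2}. measure_pmf.prob PZ {A. (i, j) \<in> A})"

definition overlap_mass :: "(nat \<times> nat) set pmf \<Rightarrow> nat \<Rightarrow> nat \<Rightarrow> nat \<Rightarrow> nat \<Rightarrow> real" where
  "overlap_mass PZ q1 q2 k l = (\<Sum>i\<in>{k..q1}. \<Sum>j\<in>{l..q2}. pZ PZ (i, j) (i - k, j - l))"

lemma overlap_mass_nonneg: "0 \<le> overlap_mass PZ q1 q2 k l"
  unfolding overlap_mass_def pZ_def by (intro sum_nonneg) auto

lemma overlap_mass_le_thinning_mass: "overlap_mass PZ q1 q2 k l \<le> thinning_mass PZ q1 q2"
proof -
  have "overlap_mass PZ q1 q2 k l \<le> (\<Sum>i\<in>{k..q1}. \<Sum>j\<in>{l..q2}. measure_pmf.prob PZ {A. (i, j) \<in> A})"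
    unfolding overlap_mass_def pZ_def by (intro sum_mono measure_pmf.finite_measure_mono) auto
  also have "\<dots> \<le> (\<Sum>i\<in>{0..q1}. \<Sum>j\<in>{l..q2}. measure_pmf.prob PZ {A. (i, j) \<in> A})"
    by (rule sum_mono2) (auto intro!: sum_nonneg)
  also have "\<dots> \<le> thinning_mass PZ q1 q2"
    unfolding thinning_mass_def by (intro sum_mono sum_mono2) auto
  finally show ?thesis .
qed

lemma sum_sum_pos:
  fixes f :: "'a \<Rightarrow> 'b \<Rightarrow> real"
  assumes "finite I" "finite J" "i \<in> I" "j \<in> J" "f i j \<noteq> 0"
    and nonneg: "\<And>i j. i \<in> I \<Longrightarrow> j \<in> J \<Longrightarrow> 0 \<le> f i j"
  shows "0 < (\<Sum>i\<in>I. \<Sum>j\<in>J. f i j)"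
proof -
  have "0 < f i j" using nonneg[OF assms(3,4)] assms(5) by linarith
  then show ?thesis
    by (intro sum_pos2[OF assms(1,3)] sum_pos2[OF assms(2,4)] sum_nonneg) (use assms(3) in \<open>auto intro: nonneg\<close>)
qed

lemma integral_thinning_pgf:
  fixes PZ :: "(nat \<times> nat) set pmf" and u1 u2 :: real
  shows "(\<integral>z. u1 ^ (if P \<and> a \<in> z then 1 else 0) * u2 ^ (if Q \<and> b \<in> z then 1 else 0) \<partial>measure_pmf PZ) - 1
    = (if P then (u1 - 1) * measure_pmf.prob PZ {z. a \<in> z} else 0)
      + (if Q then (u2 - 1) * measure_pmf.prob PZ {z. b \<in> z} else 0)
      + (if P \<and> Q then (u1 - 1) * (u2 - 1) * pZ PZ a b else 0)"
proof -
  define A where "A = {z. a \<in> z}"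
  define B where "B = {z::(nat \<times> nat) set. b \<in> z}"
  define c1 where "c1 = (if P then u1 - 1 else 0)"
  define c2 where "c2 = (if Q then u2 - 1 else 0)"
  define c3 where "c3 = (if P \<and> Q then (u1 - 1) * (u2 - 1) else 0)"
  have "u1 ^ (if P \<and> a \<in> z then 1 else 0) * u2 ^ (if Q \<and> b \<in> z then 1 else 0)
     = 1 + c1 * indicator A z + c2 * indicator B z + c3 * indicator (A \<inter> B) z" for z
    by (auto simp: c1_def c2_def c3_def A_def B_def indicator_def algebra_simps)
  moreover have "(\<integral>z. 1 + c1 * indicator A z + c2 * indicator B z + c3 * indicator (A \<inter> B) z \<partial>measure_pmf PZ)
      = 1 + c1 * measure_pmf.prob PZ A + c2 * measure_pmf.prob PZ B + c3 * measure_pmf.prob PZ (A \<inter> B)"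
    by (simp add: less_top[symmetric])
  moreover have "A \<inter> B = {z. a \<in> z \<and> b \<in> z}" by (auto simp: A_def B_def)
  ultimately show ?thesis
    by (simp add: c1_def c2_def c3_def A_def B_def pZ_def)
qed

lemma sum_cells_integral_thinning_pgf:
  fixes PZ :: "(nat \<times> nat) set pmf" and q1 q2 k l :: nat and s t :: int and u1 u2 :: real
  defines "B1 \<equiv> cell_box q1 q2 s t" and "B2 \<equiv> cell_box q1 q2 (s - int k) (t - int l)"
  shows "(\<Sum>c\<in>B1 \<union> B2. (\<integral>z. u1 ^ (if c \<in> B1 \<and> cell_lag s t c \<in> z then 1 else 0)
        * u2 ^ (if c \<in> B2 \<and> cell_lag (s - int k) (t - int l) c \<in> z then 1 else 0) \<partial>measure_pmf PZ) - 1)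
    = (u1 - 1) * thinning_mass PZ q1 q2 + (u2 - 1) * thinning_mass PZ q1 q2
      + (u1 - 1) * (u2 - 1) * overlap_mass PZ q1 q2 k l"
proof -
  have fin: "finite (B1 \<union> B2)" by (simp add: B1_def B2_def)
  have restrict: "(\<Sum>c\<in>B1 \<union> B2. if c \<in> B then f c else 0) = (\<Sum>c\<in>B. f c)"
    if "B \<subseteq> B1 \<union> B2" for B and f :: "int \<times> int \<Rightarrow> real"
    using sum.inter_restrict[OF fin, of f B] that by (simp add: Int_absorb1)
  have "(\<Sum>c\<in>B1 \<union> B2. (\<integral>z. u1 ^ (if c \<in> B1 \<and> cell_lag s t c \<in> z then 1 else 0)
        * u2 ^ (if c \<in> B2 \<and> cell_lag (s - int k) (t - int l) c \<in> z then 1 else 0) \<partial>measure_pmf PZ) - 1)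
    = (\<Sum>c\<in>B1 \<union> B2. (u1 - 1) * (if c \<in> B1 then measure_pmf.prob PZ {z. cell_lag s t c \<in> z} else 0)
      + (u2 - 1) * (if c \<in> B2 then measure_pmf.prob PZ {z. cell_lag (s - int k) (t - int l) c \<in> z} else 0)
      + (u1 - 1) * (u2 - 1) * (if c \<in> B1 \<inter> B2
          then pZ PZ (cell_lag s t c) (cell_lag (s - int k) (t - int l) c) else 0))"
    unfolding integral_thinning_pgf by (intro sum.cong) auto
  also have "\<dots> = (u1 - 1) * (\<Sum>c\<in>B1. measure_pmf.prob PZ {z. cell_lag s t c \<in> z})
      + (u2 - 1) * (\<Sum>c\<in>B2. measure_pmf.prob PZ {z. cell_lag (s - int k) (t - int l) c \<in> z})
      + (u1 - 1) * (u2 - 1) * (\<Sum>c\<in>B1 \<inter> B2. pZ PZ (cell_lag s t c) (cell_lag (s - int k) (t - int l) c))"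
    unfolding sum.distrib sum_distrib_left[symmetric] by (subst (1 2 3) restrict[symmetric]) auto
  also have "\<dots> = (u1 - 1) * thinning_mass PZ q1 q2 + (u2 - 1) * thinning_mass PZ q1 q2
      + (u1 - 1) * (u2 - 1) * overlap_mass PZ q1 q2 k l"
    unfolding B1_def B2_def thinning_mass_def overlap_mass_def sum_cell_box_inter
    using sum_cell_box[where f="\<lambda>ij. measure_pmf.prob PZ {z. ij \<in> z}"] by simp
  finally show ?thesis .
qed

section \<open>The INMA field with Poisson innovations\<close>

locale inma_poisson = prob_space M
  for M :: "'a measure"
    and eps :: "int \<times> int \<Rightarrow> 'a \<Rightarrow> nat"
    and Z :: "int \<times> int \<times> nat \<Rightarrow> 'a \<Rightarrow> (nat \<times> nat) set"
    and \<mu> :: real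
    and PZ :: "(nat \<times> nat) set pmf" +
  assumes indep_family: "indep_vars (\<lambda>_. count_space UNIV) (inma_family eps Z) UNIV"
    and distr_eps: "distr M (count_space UNIV) (eps c) = measure_pmf (poisson_pmf \<mu>)"
    and distr_Z: "distr M (count_space UNIV) (Z x) = measure_pmf PZ"
    and rate_pos: "0 < \<mu>"
begin

lemma measurable_family: "inma_family eps Z j \<in> measurable M (count_space UNIV)"
  using indep_family by (auto simp: indep_vars_def)

lemma measurable_eps: "eps c \<in> measurable M (count_space UNIV)"
  using measurable_compose[OF measurable_family[of "Inl c"], of projl "count_space UNIV"]
  by (simp add: inma_family_def)

lemma measurable_Z: "Z x \<in> measurable M (count_space UNIV)"
  using measurable_compose[OF measurable_family[of "Inr x"], of projr "count_space UNIV"]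
  by (simp add: inma_family_def)

lemma measurable_inma_field: "inma_field q1 q2 eps Z s t \<in> measurable M (count_space UNIV)"
proof -
  have "(\<lambda>\<omega>. \<Sum>r\<in>{1..eps (a, b) \<omega>}. Zcomp Z a b r i j \<omega>) \<in> measurable M (count_space UNIV)" for a b i j
  proof -
    have "(\<lambda>\<omega>. (\<lambda>n \<omega>. \<Sum>r\<in>{1..n}. Zcomp Z a b r i j \<omega>) (eps (a, b) \<omega>) \<omega>) \<in> measurable M (count_space UNIV)"
      by (rule measurable_compose_countable[OF _ measurable_eps])
        (auto simp: Zcomp_def[abs_def] intro!: measurable_sum_nat measurable_compose[OF measurable_Z])
    then show ?thesis by simp
  qed
  then show ?thesis
    unfolding inma_field_def[abs_def] by (intro measurable_sum_nat)
qed

lemma integral_eps_eq_thinning_prod: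
  fixes g :: "(nat \<times> nat) set \<Rightarrow> real"
  assumes g: "\<And>z. \<bar>g z\<bar> \<le> 1"
  shows "(\<integral>\<omega>. (if eps c \<omega> = n then \<Prod>r\<in>{1..n}. g (Z (fst c, snd c, r) \<omega>) else 0) \<partial>M)
    = pmf (poisson_pmf \<mu>) n * (\<integral>z. g z \<partial>measure_pmf PZ) ^ n"
proof -
  define F where "F v = (case v of Inl m \<Rightarrow> of_bool (m = n) | Inr z \<Rightarrow> g z)" for v
  define X where "X j \<omega> = F (inma_family eps Z j \<omega>)" for j \<omega>
  define J where "J = insert (Inl c) ((\<lambda>r. Inr (fst c, snd c, r)) ` {1..n})"
  have inj: "inj_on (\<lambda>r. Inr (fst c, snd c, r) :: int \<times> int + int \<times> int \<times> nat) A" for A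
    by (auto simp: inj_on_def)
  have indep: "indep_vars (\<lambda>_. borel) X J"
    unfolding X_def by (rule indep_vars_compose2[OF indep_vars_subset[OF indep_family]]) auto
  have "X j \<in> borel_measurable M" for j
    unfolding X_def by (rule measurable_compose[OF measurable_family]) simp
  then have integrable: "integrable M (X j)" for j
    by (rule integrable_const_bound[where B=1, rotated]) (use g in \<open>auto simp: X_def F_def split: sum.split\<close>)
  have inl: "(\<integral>\<omega>. X (Inl c) \<omega> \<partial>M) = pmf (poisson_pmf \<mu>) n"
  proof -
    have "(\<integral>\<omega>. X (Inl c) \<omega> \<partial>M) = (\<integral>m. indicator {n} m \<partial>distr M (count_space UNIV) (eps c))"
      by (subst integral_distr[OF measurable_eps]) (auto simp: X_def[abs_def] F_def inma_family_def indicator_def)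
    then show ?thesis by (simp add: distr_eps measure_pmf_single)
  qed
  have inr: "(\<integral>\<omega>. X (Inr (fst c, snd c, r)) \<omega> \<partial>M) = (\<integral>z. g z \<partial>measure_pmf PZ)" for r
  proof -
    have "(\<integral>\<omega>. X (Inr (fst c, snd c, r)) \<omega> \<partial>M) = (\<integral>z. g z \<partial>distr M (count_space UNIV) (Z (fst c, snd c, r)))"
      by (subst integral_distr[OF measurable_Z]) (auto simp: X_def[abs_def] F_def inma_family_def)
    then show ?thesis by (simp add: distr_Z)
  qed
  have "(\<Prod>j\<in>J. X j \<omega>) = (if eps c \<omega> = n then \<Prod>r\<in>{1..n}. g (Z (fst c, snd c, r) \<omega>) else 0)" for \<omega>
    unfolding J_def by (subst prod.insert) (auto simp: prod.reindex[OF inj] X_def F_def inma_family_def)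
  then have "(\<integral>\<omega>. (if eps c \<omega> = n then \<Prod>r\<in>{1..n}. g (Z (fst c, snd c, r) \<omega>) else 0) \<partial>M)
      = (\<integral>\<omega>. (\<Prod>j\<in>J. X j \<omega>) \<partial>M)"
    by simp
  also have "\<dots> = (\<Prod>j\<in>J. \<integral>\<omega>. X j \<omega> \<partial>M)"
    by (rule indep_vars_lebesgue_integral[OF _ indep integrable]) (simp add: J_def)
  also have "\<dots> = (\<integral>\<omega>. X (Inl c) \<omega> \<partial>M) * (\<Prod>r\<in>{1..n}. \<integral>\<omega>. X (Inr (fst c, snd c, r)) \<omega> \<partial>M)"
    unfolding J_def by (subst prod.insert) (auto simp: prod.reindex[OF inj])
  finally show ?thesis by (simp add: inl inr)
qed

lemma integral_compound_poisson:
  fixes g :: "(nat \<times> nat) set \<Rightarrow> real"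
  assumes g: "\<And>z. \<bar>g z\<bar> \<le> 1"
  shows "(\<integral>\<omega>. (\<Prod>r\<in>{1..eps c \<omega>}. g (Z (fst c, snd c, r) \<omega>)) \<partial>M) = exp (\<mu> * ((\<integral>z. g z \<partial>measure_pmf PZ) - 1))"
proof -
  define h where "h \<omega> = (\<Prod>r\<in>{1..eps c \<omega>}. g (Z (fst c, snd c, r) \<omega>))" for \<omega>
  have "(\<lambda>\<omega>. (\<lambda>n \<omega>. \<Prod>r\<in>{1..n}. g (Z (fst c, snd c, r) \<omega>)) (eps c \<omega>) \<omega>) \<in> borel_measurable M"
    by (rule measurable_compose_countable[OF _ measurable_eps])
      (intro borel_measurable_prod measurable_compose[OF measurable_Z], simp)
  then have "h \<in> borel_measurable M" by (simp add: h_def[abs_def])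
  moreover have "\<bar>h \<omega>\<bar> \<le> 1" for \<omega>
    unfolding h_def abs_prod by (rule prod_le_1) (use g in auto)
  ultimately have "(\<lambda>n. \<integral>\<omega>. (if eps c \<omega> = n then h \<omega> else 0) \<partial>M) sums (\<integral>\<omega>. h \<omega> \<partial>M)"
    by (intro sums_integral_partition_nat[OF measurable_eps])
  moreover have "(\<integral>\<omega>. (if eps c \<omega> = n then h \<omega> else 0) \<partial>M)
      = pmf (poisson_pmf \<mu>) n * (\<integral>z. g z \<partial>measure_pmf PZ) ^ n" for n
    by (subst integral_eps_eq_thinning_prod[OF g, symmetric])
      (auto simp: h_def intro!: Bochner_Integration.integral_cong)
  moreover have "(\<lambda>n. pmf (poisson_pmf \<mu>) n * (\<integral>z. g z \<partial>measure_pmf PZ) ^ n)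
      sums exp (\<mu> * ((\<integral>z. g z \<partial>measure_pmf PZ) - 1))"
    using poi_pgf_sums[of \<mu>] rate_pos by (simp add: poi_def)
  ultimately show ?thesis by (simp add: h_def sums_iff)
qed

lemma indep_vars_cell_products:
  fixes G :: "int \<times> int \<Rightarrow> (nat \<times> nat) set \<Rightarrow> real"
  shows "indep_vars (\<lambda>_. borel) (\<lambda>c \<omega>. \<Prod>r\<in>{1..eps c \<omega>}. G c (Z (fst c, snd c, r) \<omega>)) C"
proof -
  \<comment> \<open>The product for cell \<open>c\<close> only reads the block \<open>K c\<close> of the family, and these blocks are disjoint.\<close>
  define K where "K c = insert (Inl c) (Inr ` {x::int \<times> int \<times> nat. (fst x, fst (snd x)) = c})" for c
  define \<Phi> where "\<Phi> c x = (\<Prod>r\<in>{1..projl (x (Inl c))}. G c (projr (x (Inr (fst c, snd c, r)))))"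
    for c and x :: "int \<times> int + int \<times> int \<times> nat \<Rightarrow> nat + (nat \<times> nat) set"
  have "disjoint_family_on K C"
    by (auto simp: disjoint_family_on_def K_def)
  then have restricted: "indep_vars (\<lambda>c. Pi\<^sub>M (K c) (\<lambda>_. count_space UNIV))
      (\<lambda>c \<omega>. restrict (\<lambda>j. inma_family eps Z j \<omega>) (K c)) C"
    by (intro indep_vars_restrict[OF indep_family]) auto
  have "\<Phi> c \<in> borel_measurable (Pi\<^sub>M (K c) (\<lambda>_. count_space UNIV))" for c
  proof -
    have "(\<lambda>x. (\<lambda>n x. \<Prod>r\<in>{1..n}. G c (projr (x (Inr (fst c, snd c, r))))) (projl (x (Inl c))) x)
        \<in> borel_measurable (Pi\<^sub>M (K c) (\<lambda>_. count_space UNIV))"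
      by (rule measurable_compose_countable)
        (auto simp: K_def intro!: borel_measurable_prod measurable_compose[OF measurable_component_singleton])
    then show ?thesis by (simp add: \<Phi>_def[abs_def])
  qed
  from indep_vars_compose2[OF restricted this]
  show ?thesis by (simp add: \<Phi>_def K_def inma_family_def)
qed

lemma integral_prod_cells:
  fixes G :: "int \<times> int \<Rightarrow> (nat \<times> nat) set \<Rightarrow> real"
  assumes "finite C" and G: "\<And>c z. \<bar>G c z\<bar> \<le> 1"
  shows "(\<integral>\<omega>. (\<Prod>c\<in>C. \<Prod>r\<in>{1..eps c \<omega>}. G c (Z (fst c, snd c, r) \<omega>)) \<partial>M)
    = exp (\<mu> * (\<Sum>c\<in>C. (\<integral>z. G c z \<partial>measure_pmf PZ) - 1))"
proof -
  note indep = indep_vars_cell_products[of G C]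
  have "integrable M (\<lambda>\<omega>. \<Prod>r\<in>{1..eps c \<omega>}. G c (Z (fst c, snd c, r) \<omega>))" if "c \<in> C" for c
  proof (rule integrable_const_bound[where B=1])
    show "AE \<omega> in M. norm (\<Prod>r\<in>{1..eps c \<omega>}. G c (Z (fst c, snd c, r) \<omega>)) \<le> 1"
      by (auto simp: abs_prod intro!: prod_le_1 G)
    show "(\<lambda>\<omega>. \<Prod>r\<in>{1..eps c \<omega>}. G c (Z (fst c, snd c, r) \<omega>)) \<in> borel_measurable M"
      using indep that by (auto simp: indep_vars_def)
  qed
  then have "(\<integral>\<omega>. (\<Prod>c\<in>C. \<Prod>r\<in>{1..eps c \<omega>}. G c (Z (fst c, snd c, r) \<omega>)) \<partial>M)
      = (\<Prod>c\<in>C. \<integral>\<omega>. (\<Prod>r\<in>{1..eps c \<omega>}. G c (Z (fst c, snd c, r) \<omega>)) \<partial>M)"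
    by (intro indep_vars_lebesgue_integral[OF \<open>finite C\<close> indep])
  also have "\<dots> = (\<Prod>c\<in>C. exp (\<mu> * ((\<integral>z. G c z \<partial>measure_pmf PZ) - 1)))"
    by (intro prod.cong refl integral_compound_poisson G)
  finally show ?thesis
    by (simp add: exp_sum[OF \<open>finite C\<close>] sum_distrib_left)
qed

lemma inma_joint_pgf:
  fixes u1 u2 :: real
  assumes "\<bar>u1\<bar> \<le> 1" and "\<bar>u2\<bar> \<le> 1"
  shows "(\<integral>\<omega>. u1 ^ inma_field q1 q2 eps Z s t \<omega> * u2 ^ inma_field q1 q2 eps Z (s - int k) (t - int l) \<omega> \<partial>M)
    = exp (\<mu> * ((u1 - 1) * thinning_mass PZ q1 q2 + (u2 - 1) * thinning_mass PZ q1 q2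
        + (u1 - 1) * (u2 - 1) * overlap_mass PZ q1 q2 k l))"
proof -
  have "\<bar>u1 ^ (if P then 1 else 0) * u2 ^ (if Q then 1 else 0)\<bar> \<le> 1" for P Q
    using assms by (auto simp: abs_mult intro: mult_le_one)
  then show ?thesis
    unfolding inma_field_pow_mult by (subst integral_prod_cells) (simp_all add: sum_cells_integral_thinning_pgf)
qed

lemma inma_pair_distr:
  "distr M (count_space UNIV)
      (\<lambda>\<omega>. (inma_field q1 q2 eps Z s t \<omega>, inma_field q1 q2 eps Z (s - int k) (t - int l) \<omega>))
    = measure_pmf (bivariate_poisson (\<mu> * (thinning_mass PZ q1 q2 - overlap_mass PZ q1 q2 k l))
        (\<mu> * overlap_mass PZ q1 q2 k l))"
proof (rule distr_pair_eq_if_joint_pgf_eq[OF prob_space_axioms measurable_inma_field measurable_inma_field])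
  fix u v :: real assume uv: "0 < u" "u < 1" "0 < v" "v < 1"
  have rates: "0 \<le> \<mu> * (thinning_mass PZ q1 q2 - overlap_mass PZ q1 q2 k l)" "0 \<le> \<mu> * overlap_mass PZ q1 q2 k l"
    using rate_pos overlap_mass_nonneg overlap_mass_le_thinning_mass by simp_all
  show "(\<integral>\<omega>. u ^ inma_field q1 q2 eps Z s t \<omega> * v ^ inma_field q1 q2 eps Z (s - int k) (t - int l) \<omega> \<partial>M)
      = (\<integral>x. u ^ fst x * v ^ snd x \<partial>measure_pmf (bivariate_poisson
          (\<mu> * (thinning_mass PZ q1 q2 - overlap_mass PZ q1 q2 k l)) (\<mu> * overlap_mass PZ q1 q2 k l)))"
  proof -
    have "(\<integral>x. u ^ fst x * v ^ snd x \<partial>measure_pmf (bivariate_poisson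
          (\<mu> * (thinning_mass PZ q1 q2 - overlap_mass PZ q1 q2 k l)) (\<mu> * overlap_mass PZ q1 q2 k l)))
        = exp (\<mu> * (thinning_mass PZ q1 q2 - overlap_mass PZ q1 q2 k l) * (u - 1))
          * (exp (\<mu> * (thinning_mass PZ q1 q2 - overlap_mass PZ q1 q2 k l) * (v - 1))
          * exp (\<mu> * overlap_mass PZ q1 q2 k l * (u * v - 1)))"
      by (rule bivariate_poisson_pgf[OF rates]) (use uv in auto)
    then show ?thesis
      using uv by (simp add: inma_joint_pgf mult_exp_exp algebra_simps)
  qed
qed

lemma inma_corr:
  assumes "0 < thinning_mass PZ q1 q2"
  shows "corr M (\<lambda>\<omega>. real (inma_field q1 q2 eps Z s t \<omega>))
      (\<lambda>\<omega>. real (inma_field q1 q2 eps Z (s + int k) (t + int l) \<omega>))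
    = overlap_mass PZ q1 q2 k l / thinning_mass PZ q1 q2"
proof -
  have "corr M (\<lambda>\<omega>. real (inma_field q1 q2 eps Z (s + int k) (t + int l) \<omega>))
      (\<lambda>\<omega>. real (inma_field q1 q2 eps Z s t \<omega>))
    = \<mu> * overlap_mass PZ q1 q2 k l
      / (\<mu> * (thinning_mass PZ q1 q2 - overlap_mass PZ q1 q2 k l) + \<mu> * overlap_mass PZ q1 q2 k l)"
    using inma_pair_distr[of q1 q2 "s + int k" "t + int l" k l] assms rate_pos
      overlap_mass_nonneg[of PZ q1 q2 k l] overlap_mass_le_thinning_mass[of PZ q1 q2 k l]
    by (intro corr_bivariate_poisson[OF prob_space_axioms measurable_pair_nat[OF measurable_inma_field measurable_inma_field]])
      (simp_all add: algebra_simps)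
  also have "\<dots> = overlap_mass PZ q1 q2 k l / thinning_mass PZ q1 q2"
    using rate_pos by (simp add: algebra_simps)
  finally show ?thesis by (simp only: corr_commute[of M])
qed

end

theorem corollary1:
  fixes M :: "'a measure"
    and q1 q2 :: nat
    and \<beta> :: "nat \<Rightarrow> nat \<Rightarrow> real"
    and \<mu>\<epsilon> :: real
    and eps :: "int \<times> int \<Rightarrow> 'a \<Rightarrow> nat"
    and Z :: "int \<times> int \<times> nat \<Rightarrow> 'a \<Rightarrow> (nat \<times> nat) set"
    and PZ :: "(nat \<times> nat) set pmf"
    and k l :: nat and s t :: int
  assumes "prob_space M"
    and "q1 + q2 \<ge> 1"
    and "\<And>i j. i \<le> q1 \<Longrightarrow> j \<le> q2 \<Longrightarrow> 0 \<le> \<beta> i j \<and> \<beta> i j \<le> 1"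
    and "\<exists>i\<le>q1. \<exists>j\<le>q2. \<beta> i j \<noteq> 0"
    and "\<And>i j. i \<le> q1 \<Longrightarrow> j \<le> q2 \<Longrightarrow> measure_pmf.prob PZ {A. (i, j) \<in> A} = \<beta> i j"
    and "\<mu>\<epsilon> > 0"
    and "prob_space.indep_vars M (\<lambda>_. count_space UNIV) (inma_family eps Z) UNIV"
    and "\<And>st. distr M (count_space UNIV) (eps st) = measure_pmf (poisson_pmf \<mu>\<epsilon>)"
    and "\<And>str. distr M (count_space UNIV) (Z str) = measure_pmf PZ"
    and "k \<le> q1" and "l \<le> q2"
  shows
    "let \<beta>sum = (\<Sum>i\<in>{0..q1}. \<Sum>j\<in>{0..q2}. \<beta> i j);
         \<mu>X = \<mu>\<epsilon> * \<beta>sum;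
         X = inma_field q1 q2 eps Z;
         \<rho> = (1 / \<beta>sum) * (\<Sum>i\<in>{k..q1}. \<Sum>j\<in>{l..q2}. pZ PZ (i, j) (i - k, j - l))
     in corr M (\<lambda>\<omega>. real (X s t \<omega>)) (\<lambda>\<omega>. real (X (s + int k) (t + int l) \<omega>)) = \<rho>
      \<and> (\<forall>u1 u2 :: real. u1 \<in> {-1..1} \<longrightarrow> u2 \<in> {-1..1} \<longrightarrow>
            (\<integral>\<omega>. u1 ^ X s t \<omega> * u2 ^ X (s - int k) (t - int l) \<omega> \<partial>M)
              = exp (\<mu>X * (u1 + u2 - 2)) * exp (\<mu>X * \<rho> * (u1 - 1) * (u2 - 1)))
      \<and> distr M (count_space UNIV) (\<lambda>\<omega>. (X s t \<omega>, X (s - int k) (t - int l) \<omega>))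
          = measure_pmf (map_pmf (\<lambda>(a, b, c). (a + c, b + c))
               (pair_pmf (poi (\<mu>X * (1 - \<rho>))) (pair_pmf (poi (\<mu>X * (1 - \<rho>))) (poi (\<mu>X * \<rho>)))))"
proof -
  interpret inma_poisson M eps Z \<mu>\<epsilon> PZ
    by (rule inma_poisson.intro[OF assms(1) inma_poisson_axioms.intro[OF assms(7-9,6)]])
  define m where "m = thinning_mass PZ q1 q2"
  define c where "c = overlap_mass PZ q1 q2 k l"
  have beta_sum: "(\<Sum>i\<in>{0..q1}. \<Sum>j\<in>{0..q2}. \<beta> i j) = m"
    unfolding m_def thinning_mass_def using assms(5) by (intro sum.cong) auto
  obtain i j where "i \<le> q1" "j \<le> q2" "\<beta> i j \<noteq> 0" using assms(4) by blast
  then have "0 < m"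
    unfolding beta_sum[symmetric] using assms(3) by (intro sum_sum_pos) auto
  have rates: "\<mu>\<epsilon> * m * (1 - 1 / m * c) = \<mu>\<epsilon> * (m - c)" "\<mu>\<epsilon> * m * (1 / m * c) = \<mu>\<epsilon> * c"
    using \<open>0 < m\<close> by (simp_all add: field_simps)
  have pgf: "(\<integral>\<omega>. u1 ^ inma_field q1 q2 eps Z s t \<omega> * u2 ^ inma_field q1 q2 eps Z (s - int k) (t - int l) \<omega> \<partial>M)
      = exp (\<mu>\<epsilon> * m * (u1 + u2 - 2)) * exp (\<mu>\<epsilon> * c * (u1 - 1) * (u2 - 1))"
    if "u1 \<in> {-1..1}" "u2 \<in> {-1..1}" for u1 u2 :: real
    using that unfolding mult_exp_exp m_def c_def
    by (subst inma_joint_pgf) (auto intro!: arg_cong[where f=exp] simp: algebra_simps)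
  show ?thesis
    unfolding Let_def beta_sum overlap_mass_def[symmetric] c_def[symmetric] rates
    using inma_corr[of q1 q2 s t k l] \<open>0 < m\<close> pgf inma_pair_distr[of q1 q2 s t k l]
    by (simp add: m_def c_def bivariate_poisson_def)
qed

end
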